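(* For a partition $\lambda$, the crystal skeleton $\mathsf{CS}(\lambda)$ is strongly connected if and only if $\lambda=(w^\ell)$ is a rectangle (all parts equal).
   Context: French notation; $|\lambda|=N$; $\mathsf{SYT}(\lambda)$ standard tableaux; $\mathsf{SSYT}(\lambda)_n$ semistandard tableaux with entries in $[n]$; $\mathsf{row}(b)$ reads rows left to right from the top row to the bottom row; $\mathsf{std}(b)$ replaces the $a_j$ entries $j$, in reading order, by $a_1+\dots+a_{j-1}+1,\dots,a_1+\dots+a_j$. The crystal $B(\lambda)_n$ is $\mathsf{SSYT}(\lambda)_n$ with operators $f_i$ ($1\le i<n$): in the subword of $\mathsf{row}(b)$ of letters $i,i+1$, bracket each $i+1$ with an unbracketed $i$ to its right (parenthesis matching); the unbracketed letters form $i^r(i+1)^s$ and $f_i$ changes the rightmost unbracketed $i$ to $i+1$ ($\emptyset$ if $r=0$). Fix $n\ge N$. The crystal skeleton $\mathsf{CS}(\lambda)$ is the directed graph on $\mathsf{SYT}(\lambda)$ with an edge $T\to T'$ ($T\ne T'$) whenever there are $b,b'\in B(\lambda)_n$ with $\mathsf{std}(b)=T$, $\mathsf{std}(b')=T'$ and $f_i(b)=b'$ for some $i$. A directed graph is strongly connected if any vertex can be reached from any other by a directed path. *)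

theory Defs
  imports Main
begin

definition is_partition :: "nat list \<Rightarrow> bool" where
  "is_partition la \<longleftrightarrow> sorted_wrt (\<ge>) la \<and> 0 \<notin> set la"

text \<open>Cells of the Young diagram in French notation: row r (r = 0 is the bottom,
  longest row), column c.\<close>
definition cells :: "nat list \<Rightarrow> (nat \<times> nat) set" where
  "cells la = {(r, c). r < length la \<and> c < la ! r}"

definition SSYT :: "nat list \<Rightarrow> nat \<Rightarrow> ((nat \<times> nat) \<Rightarrow> nat) set" where
  "SSYT la n = {T. (\<forall>p. p \<notin> cells la \<longrightarrow> T p = 0)
      \<and> (\<forall>p\<in>cells la. 1 \<le> T p \<and> T p \<le> n)
      \<and> (\<forall>r c. (r, Suc c) \<in> cells la \<longrightarrow> T (r, c) \<le> T (r, Suc c))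
      \<and> (\<forall>r c. (Suc r, c) \<in> cells la \<longrightarrow> T (r, c) < T (Suc r, c))}"

definition SYT :: "nat list \<Rightarrow> ((nat \<times> nat) \<Rightarrow> nat) set" where
  "SYT la = {T. (\<forall>p. p \<notin> cells la \<longrightarrow> T p = 0)
      \<and> bij_betw T (cells la) {1..sum_list la}
      \<and> (\<forall>r c. (r, Suc c) \<in> cells la \<longrightarrow> T (r, c) < T (r, Suc c))
      \<and> (\<forall>r c. (Suc r, c) \<in> cells la \<longrightarrow> T (r, c) < T (Suc r, c))}"

definition row_word :: "nat list \<Rightarrow> ((nat \<times> nat) \<Rightarrow> nat) \<Rightarrow> nat list" where
  "row_word la T = concat (map (\<lambda>r. map (\<lambda>c. T (r, c)) [0..<la ! r]) (rev [0..<length la]))"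

definition read_before :: "nat \<times> nat \<Rightarrow> nat \<times> nat \<Rightarrow> bool" where
  "read_before p q \<longleftrightarrow> fst p > fst q \<or> (fst p = fst q \<and> snd p < snd q)"

definition std :: "nat list \<Rightarrow> ((nat \<times> nat) \<Rightarrow> nat) \<Rightarrow> ((nat \<times> nat) \<Rightarrow> nat)" where
  "std la b q = (if q \<in> cells la then
      card {p \<in> cells la. b p < b q} + card {p \<in> cells la. b p = b q \<and> read_before p q} + 1
    else 0)"

text \<open>Positions of the unbracketed letters i in a word (letters i+1 are brackets
  matched with unbracketed i's to their right); d counts currently open i+1's,
  p is the current position.\<close>
fun unbr :: "nat \<Rightarrow> nat \<Rightarrow> nat list \<Rightarrow> nat \<Rightarrow> nat list" where
  "unbr i d [] p = []"
| "unbr i d (x # xs) p =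
     (if x = Suc i then unbr i (Suc d) xs (Suc p)
      else if x = i then (if d > 0 then unbr i (d - 1) xs (Suc p) else p # unbr i d xs (Suc p))
      else unbr i d xs (Suc p))"

text \<open>Crystal operator f_i on words (None stands for the zero element).\<close>
definition f_word :: "nat \<Rightarrow> nat list \<Rightarrow> nat list option" where
  "f_word i w = (case unbr i 0 w 0 of [] \<Rightarrow> None | ps \<Rightarrow> Some (w[last ps := Suc i]))"

text \<open>f_i(b) = b' in B(lambda)_n: f_i acts on the reading word, and the reading word
  determines the tableau of the given shape.\<close>
definition crystal_f :: "nat list \<Rightarrow> nat \<Rightarrow> ((nat \<times> nat) \<Rightarrow> nat) \<Rightarrow> ((nat \<times> nat) \<Rightarrow> nat) \<Rightarrow> bool" where
  "crystal_f la i b b' \<longleftrightarrow> f_word i (row_word la b) = Some (row_word la b')"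

definition CS_edges :: "nat list \<Rightarrow> nat \<Rightarrow> (((nat \<times> nat) \<Rightarrow> nat) \<times> ((nat \<times> nat) \<Rightarrow> nat)) set" where
  "CS_edges la n = {(T, T'). T \<in> SYT la \<and> T' \<in> SYT la \<and> T \<noteq> T' \<and>
      (\<exists>b\<in>SSYT la n. \<exists>b'\<in>SSYT la n. \<exists>i. 1 \<le> i \<and> i < n \<and>
          std la b = T \<and> std la b' = T' \<and> crystal_f la i b b')}"

definition strongly_connected_on :: "'a set \<Rightarrow> ('a \<times> 'a) set \<Rightarrow> bool" where
  "strongly_connected_on V E \<longleftrightarrow> (\<forall>x\<in>V. \<forall>y\<in>V. (x, y) \<in> E\<^sup>*)"

definition is_rectangle :: "nat list \<Rightarrow> bool" where
  "is_rectangle la \<longleftrightarrow> (\<exists>w l. la = replicate l w)"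

end

theory Submission
  imports Defs
begin

text \<open>If \<open>\<lambda>\<close> is not a rectangle, some row below the top row ends in a corner. Along an edge
  \<open>T \<rightarrow> T'\<close> of the skeleton the largest entry of \<open>T'\<close> never lies in a higher row than the
  largest entry of \<open>T\<close>: the operator \<open>f\<^sub>i\<close> raises the last unbracketed \<open>i\<close>, and when this
  creates a new maximum, every later \<open>i\<close> in reading order would be unbracketed as well. Hence
  no path leads from a tableau with its largest entry in that corner to one with its largest
  entry in the top row.

  If \<open>\<lambda> = (w\<^sup>\<ell>)\<close>, applying crystal operators to any \<open>b\<close> terminates in the only tableau
  killed by all \<open>f\<^sub>i\<close>, whose rows are constant equal to \<open>n - \<ell> + 1, \<dots>, n\<close>; so every vertex
  reaches its standardisation \<open>H\<close>. Rotating a rectangular tableau by 180 degrees and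
  complementing its entries turns \<open>f\<^sub>i\<close> into \<open>e\<^sub>n\<^sub>-\<^sub>i\<close>, so it reverses the edges of the
  skeleton while fixing \<open>H\<close>; therefore \<open>H\<close> also reaches every vertex.\<close>

section \<open>Reading order\<close>

definition reading_cells :: "nat list \<Rightarrow> (nat \<times> nat) list" where
  "reading_cells la = concat (map (\<lambda>r. map (\<lambda>c. (r, c)) [0..<la ! r]) (rev [0..<length la]))"

lemma row_word_eq_map: "row_word la b = map b (reading_cells la)"
  unfolding row_word_def reading_cells_def by (simp add: map_concat comp_def)

lemma set_reading_cells: "set (reading_cells la) = cells la"
  unfolding reading_cells_def cells_def by auto

lemma read_before_irrefl: "\<not> read_before p p"
  by (simp add: read_before_def)

lemma read_before_asym: "read_before p q \<Longrightarrow> \<not> read_before q p"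
  by (auto simp add: read_before_def)

lemma read_before_trans: "read_before p q \<Longrightarrow> read_before q s \<Longrightarrow> read_before p s"
  by (auto simp add: read_before_def)

lemma read_before_total: "p \<noteq> q \<Longrightarrow> read_before p q \<or> read_before q p"
  by (cases p; cases q) (auto simp add: read_before_def)

lemma sorted_wrt_read_before_rows:
  "sorted_wrt (>) rs \<Longrightarrow>
   sorted_wrt read_before (concat (map (\<lambda>r. map (\<lambda>c. (r, c)) [0..<la ! r]) rs))"
proof (induction rs)
  case Nil
  then show ?case by simp
next
  case (Cons r rs)
  have "sorted_wrt read_before (map (\<lambda>c. (r, c)) [0..<la ! r])"
    by (simp add: sorted_wrt_map read_before_def)
  with Cons show ?case
    by (auto simp add: sorted_wrt_append read_before_def[abs_def])
qed

lemma sorted_wrt_read_before_reading_cells: "sorted_wrt read_before (reading_cells la)"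
  unfolding reading_cells_def by (rule sorted_wrt_read_before_rows) (simp add: sorted_wrt_rev)

lemma sorted_wrt_irrefl_imp_distinct: "sorted_wrt R xs \<Longrightarrow> (\<And>x. \<not> R x x) \<Longrightarrow> distinct xs"
  by (induction xs) auto

lemma distinct_reading_cells: "distinct (reading_cells la)"
  using sorted_wrt_read_before_reading_cells read_before_irrefl
  by (rule sorted_wrt_irrefl_imp_distinct)

lemma length_reading_cells [simp]: "length (reading_cells la) = sum_list la"
proof -
  have "length (reading_cells la) = sum_list (map (\<lambda>r. la ! r) (rev [0..<length la]))"
    unfolding reading_cells_def by (simp add: length_concat comp_def)
  also have "\<dots> = sum_list (map (\<lambda>r. la ! r) [0..<length la])"
    by (simp add: rev_map[symmetric])
  also have "\<dots> = sum_list la"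
    by (simp add: map_nth)
  finally show ?thesis .
qed

lemma finite_cells: "finite (cells la)"
  using set_reading_cells by (metis List.finite_set)

lemma card_cells: "card (cells la) = sum_list la"
  using distinct_card[OF distinct_reading_cells] by (simp add: set_reading_cells)

lemma read_before_reading_cells_iff:
  "s < sum_list la \<Longrightarrow> t < sum_list la \<Longrightarrow>
   read_before (reading_cells la ! s) (reading_cells la ! t) \<longleftrightarrow> s < t"
  using sorted_wrt_nth_less[OF sorted_wrt_read_before_reading_cells] read_before_asym
    read_before_irrefl
  by (metis length_reading_cells linorder_neqE_nat)

lemma reading_cells_nth_in_cells: "s < sum_list la \<Longrightarrow> reading_cells la ! s \<in> cells la"
  using nth_mem[of s "reading_cells la"] by (simp add: set_reading_cells)

lemma cells_reading_indexE:
  assumes "p \<in> cells la"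
  obtains s where "s < sum_list la" and "reading_cells la ! s = p"
  using assms by (metis in_set_conv_nth length_reading_cells set_reading_cells)

lemma reading_cells_nth_inj:
  "s < sum_list la \<Longrightarrow> t < sum_list la \<Longrightarrow> reading_cells la ! s = reading_cells la ! t \<Longrightarrow> s = t"
  using distinct_reading_cells by (simp add: nth_eq_iff_index_eq)

lemma reading_cells_Suc:
  assumes k: "k < sum_list la" and p: "reading_cells la ! k = (r, c)" and h: "(r, Suc c) \<in> cells la"
  shows "Suc k < sum_list la" and "reading_cells la ! Suc k = (r, Suc c)"
proof -
  obtain s where s: "s < sum_list la" "reading_cells la ! s = (r, Suc c)"
    using cells_reading_indexE[OF h] .
  have "k < s"
    using read_before_reading_cells_iff[OF k s(1)] p s by (simp add: read_before_def)
  moreover have "\<not> Suc k < s"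
  proof
    assume "Suc k < s"
    then have "read_before (r, c) (reading_cells la ! Suc k)"
      and "read_before (reading_cells la ! Suc k) (r, Suc c)"
      using read_before_reading_cells_iff[of k la "Suc k"]
        read_before_reading_cells_iff[of "Suc k" la s] k s p by simp_all
    then show False by (auto simp: read_before_def)
  qed
  ultimately have "s = Suc k" by simp
  with s show "Suc k < sum_list la" and "reading_cells la ! Suc k = (r, Suc c)" by simp_all
qed

lemma map_upd_reading_cells:
  "k < sum_list la \<Longrightarrow>
   map (b(reading_cells la ! k := v)) (reading_cells la) = (map b (reading_cells la))[k := v]"
  by (rule nth_equalityI) (auto simp: nth_list_update distinct_reading_cells nth_eq_iff_index_eq)

lemma row_word_upd:
  "k < sum_list la \<Longrightarrow> row_word la (b(reading_cells la ! k := v)) = (row_word la b)[k := v]"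
  by (simp add: row_word_eq_map map_upd_reading_cells)

section \<open>Standardisation\<close>

definition std_less :: "(nat \<times> nat \<Rightarrow> nat) \<Rightarrow> nat \<times> nat \<Rightarrow> nat \<times> nat \<Rightarrow> bool" where
  "std_less b p q \<longleftrightarrow> b p < b q \<or> (b p = b q \<and> read_before p q)"

lemma std_less_irrefl: "\<not> std_less b p p"
  by (simp add: std_less_def read_before_def)

lemma std_less_trans: "std_less b p q \<Longrightarrow> std_less b q s \<Longrightarrow> std_less b p s"
  unfolding std_less_def using read_before_trans[of p q s] by auto

lemma std_less_asym: "std_less b p q \<Longrightarrow> \<not> std_less b q p"
  unfolding std_less_def using read_before_asym[of p q] by auto

lemma std_less_total: "p \<noteq> q \<Longrightarrow> std_less b p q \<or> std_less b q p"
  unfolding std_less_def using read_before_total by (metis linorder_neqE_nat)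

lemma std_eq_card: "q \<in> cells la \<Longrightarrow> std la b q = card {p \<in> cells la. std_less b p q} + 1"
proof -
  assume q: "q \<in> cells la"
  have "{p \<in> cells la. std_less b p q} =
      {p \<in> cells la. b p < b q} \<union> {p \<in> cells la. b p = b q \<and> read_before p q}"
    unfolding std_less_def by auto
  moreover have "card ({p \<in> cells la. b p < b q} \<union> {p \<in> cells la. b p = b q \<and> read_before p q})
     = card {p \<in> cells la. b p < b q} + card {p \<in> cells la. b p = b q \<and> read_before p q}"
    by (rule card_Un_disjoint) (auto simp: finite_cells)
  ultimately show ?thesis using q by (simp add: std_def)
qed

lemma std_outside: "q \<notin> cells la \<Longrightarrow> std la b q = 0"
  by (simp add: std_def)

lemma std_strict_mono:
  assumes p: "p \<in> cells la" and q: "q \<in> cells la" and pq: "std_less b p q"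
  shows "std la b p < std la b q"
proof -
  have "{s \<in> cells la. std_less b s p} \<subset> {s \<in> cells la. std_less b s q}"
    using p pq std_less_trans std_less_irrefl by blast
  then have "card {s \<in> cells la. std_less b s p} < card {s \<in> cells la. std_less b s q}"
    by (rule psubset_card_mono[rotated]) (simp add: finite_cells)
  then show ?thesis using p q by (simp add: std_eq_card)
qed

lemma card_std_less_le: "q \<in> cells la \<Longrightarrow> card {p \<in> cells la. std_less b p q} \<le> sum_list la - 1"
proof -
  assume q: "q \<in> cells la"
  have "{p \<in> cells la. std_less b p q} \<subseteq> cells la - {q}"
    using std_less_irrefl by blast
  then have "card {p \<in> cells la. std_less b p q} \<le> card (cells la - {q})"
    by (rule card_mono[rotated]) (simp add: finite_cells)
  also have "\<dots> = sum_list la - 1"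
    using q by (simp add: card_cells finite_cells)
  finally show ?thesis .
qed

lemma sum_list_pos_if_cell: "q \<in> cells la \<Longrightarrow> 0 < sum_list la"
  using card_cells[of la] finite_cells[of la] by (metis card_gt_0_iff empty_iff)

lemma std_le_size: "q \<in> cells la \<Longrightarrow> std la b q \<le> sum_list la"
  using card_std_less_le[of q la b] sum_list_pos_if_cell[of q la] by (simp add: std_eq_card)

lemma std_eq_size_iff:
  assumes q: "q \<in> cells la"
  shows "std la b q = sum_list la \<longleftrightarrow> (\<forall>p\<in>cells la. p \<noteq> q \<longrightarrow> std_less b p q)"
proof -
  let ?A = "{p \<in> cells la. std_less b p q}"
  have sub: "?A \<subseteq> cells la - {q}"
    using std_less_irrefl by blast
  have "std la b q = sum_list la \<longleftrightarrow> card ?A = card (cells la - {q})"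
    using std_eq_card[OF q, of b] sum_list_pos_if_cell[OF q] q
    by (simp add: card_cells finite_cells) linarith
  also have "\<dots> \<longleftrightarrow> ?A = cells la - {q}"
  proof
    show "card ?A = card (cells la - {q}) \<Longrightarrow> ?A = cells la - {q}"
      using sub by (intro card_subset_eq) (simp_all add: finite_cells)
  qed simp
  also have "\<dots> \<longleftrightarrow> (\<forall>p\<in>cells la. p \<noteq> q \<longrightarrow> std_less b p q)"
    using sub by blast
  finally show ?thesis .
qed

lemma bij_betw_std: "bij_betw (std la b) (cells la) {1..sum_list la}"
proof -
  have inj: "inj_on (std la b) (cells la)"
  proof (rule inj_onI)
    fix p q assume p: "p \<in> cells la" and q: "q \<in> cells la" and eq: "std la b p = std la b q"
    show "p = q"
      using std_less_total std_strict_mono[OF p q] std_strict_mono[OF q p] eq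
      by (metis less_irrefl)
  qed
  have "std la b ` cells la \<subseteq> {1..sum_list la}"
    using std_le_size std_eq_card by fastforce
  moreover have "card (std la b ` cells la) = card {1..sum_list la}"
    using card_image[OF inj] card_cells by simp
  ultimately have "std la b ` cells la = {1..sum_list la}"
    by (simp add: card_subset_eq)
  with inj show ?thesis by (simp add: bij_betw_def)
qed

lemma std_eq_sizeE:
  assumes "cells la \<noteq> {}"
  obtains q where "q \<in> cells la" and "std la b q = sum_list la"
proof -
  have "sum_list la \<in> std la b ` cells la"
    using bij_betw_std[of la b] assms sum_list_pos_if_cell[of _ la]
    by (auto simp: bij_betw_def Suc_leI)
  then show ?thesis using that by (metis imageE)
qed

lemma partition_cell_below:
  "is_partition la \<Longrightarrow> (Suc r, c) \<in> cells la \<Longrightarrow> (r, c) \<in> cells la"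
  using sorted_wrt_nth_less[of "(\<ge>)" la r "Suc r"]
  by (fastforce simp: is_partition_def cells_def)

lemma partition_nth_pos: "is_partition la \<Longrightarrow> r < length la \<Longrightarrow> 0 < la ! r"
  by (metis is_partition_def nth_mem gr0I)

lemma std_in_SYT:
  assumes la: "is_partition la" and b: "b \<in> SSYT la n"
  shows "std la b \<in> SYT la"
proof -
  have "std la b (r, c) < std la b (r, Suc c)" if "(r, Suc c) \<in> cells la" for r c
    using that b by (intro std_strict_mono)
      (auto simp: cells_def SSYT_def std_less_def read_before_def le_less)
  moreover have "std la b (r, c) < std la b (Suc r, c)" if "(Suc r, c) \<in> cells la" for r c
    using that b partition_cell_below[OF la that]
    by (intro std_strict_mono) (auto simp: SSYT_def std_less_def)
  ultimately show ?thesis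
    unfolding SYT_def using std_outside bij_betw_std by blast
qed

lemma SYT_in_SSYT: "T \<in> SYT la \<Longrightarrow> sum_list la \<le> n \<Longrightarrow> T \<in> SSYT la n"
  unfolding SYT_def SSYT_def using bij_betwE by (fastforce simp: less_imp_le)

lemma std_SYT_eq:
  assumes T: "T \<in> SYT la"
  shows "std la T = T"
proof
  fix q
  have bij: "bij_betw T (cells la) {1..sum_list la}" and inj: "inj_on T (cells la)"
    using T by (auto simp: SYT_def bij_betw_def)
  show "std la T q = T q"
  proof (cases "q \<in> cells la")
    case True
    have "{p \<in> cells la. std_less T p q} = {p \<in> cells la. T p < T q}"
      using inj True by (auto simp: std_less_def read_before_def inj_on_def)
    moreover have "T ` {p \<in> cells la. T p < T q} = {1..<T q}"
    proof
      show "T ` {p \<in> cells la. T p < T q} \<subseteq> {1..<T q}"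
        using bij_betwE[OF bij] by auto
      have "{1..<T q} \<subseteq> T ` cells la"
        using bij_betwE[OF bij] True bij by (auto simp: bij_betw_def)
      then show "{1..<T q} \<subseteq> T ` {p \<in> cells la. T p < T q}"
        by auto
    qed
    then have "card {p \<in> cells la. T p < T q} = T q - 1"
      using card_image[of T "{p \<in> cells la. T p < T q}"] inj by (simp add: inj_on_subset)
    moreover have "1 \<le> T q"
      using bij_betwE[OF bij] True by auto
    ultimately show ?thesis
      using std_eq_card[OF True, of T] by simp
  next
    case False
    with T show ?thesis
      by (cases q) (auto simp: std_outside SYT_def)
  qed
qed

lemma std_cong:
  assumes "\<forall>p\<in>cells la. \<forall>q\<in>cells la. (b1 p < b1 q \<longleftrightarrow> b2 p < b2 q) \<and> (b1 p = b1 q \<longleftrightarrow> b2 p = b2 q)"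
  shows "std la b1 = std la b2"
proof
  fix q
  show "std la b1 q = std la b2 q"
  proof (cases "q \<in> cells la")
    case True
    then have "{p \<in> cells la. std_less b1 p q} = {p \<in> cells la. std_less b2 p q}"
      using assms unfolding std_less_def by auto
    with True show ?thesis by (simp add: std_eq_card)
  qed (simp add: std_outside)
qed

section \<open>The bracketing rule\<close>

definition bracket_wt :: "nat \<Rightarrow> nat \<Rightarrow> int" where
  "bracket_wt i v = (if v = Suc i then 1 else if v = i then -1 else 0)"

definition bracket_sum :: "nat \<Rightarrow> nat list \<Rightarrow> nat \<Rightarrow> int" where
  "bracket_sum i w t = sum_list (map (bracket_wt i) (take t w))"

text \<open>The letter \<open>i\<close> at position \<open>k\<close> is matched by an earlier \<open>i+1\<close> exactly when some
  factor \<open>w[q..<k]\<close> contains more letters \<open>i+1\<close> than \<open>i\<close>, i.e. when the prefix sum at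
  \<open>k\<close> is not minimal among the prefix sums up to \<open>k\<close>.\<close>

definition unbracketed :: "nat \<Rightarrow> nat list \<Rightarrow> nat \<Rightarrow> bool" where
  "unbracketed i w k \<longleftrightarrow>
     k < length w \<and> w ! k = i \<and> (\<forall>q\<le>k. bracket_sum i w k \<le> bracket_sum i w q)"

definition last_unbracketed :: "nat \<Rightarrow> nat list \<Rightarrow> nat \<Rightarrow> bool" where
  "last_unbracketed i w k \<longleftrightarrow> unbracketed i w k \<and> (\<forall>k'. unbracketed i w k' \<longrightarrow> k' \<le> k)"

text \<open>The state of \<^const>\<open>unbr\<close> when \<open>d\<close> letters \<open>i+1\<close> are still waiting for a partner.\<close>

definition unbracketed_open :: "nat \<Rightarrow> nat \<Rightarrow> nat list \<Rightarrow> nat \<Rightarrow> bool" where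
  "unbracketed_open i d w k \<longleftrightarrow>
     int d + bracket_sum i w k \<le> 0 \<and> (\<forall>q\<le>k. bracket_sum i w k \<le> bracket_sum i w q)"

lemma bracket_sum_0 [simp]: "bracket_sum i w 0 = 0"
  by (simp add: bracket_sum_def)

lemma bracket_sum_Cons_Suc [simp]: "bracket_sum i (x # w) (Suc k) = bracket_wt i x + bracket_sum i w k"
  by (simp add: bracket_sum_def)

lemma bracket_sum_Suc:
  "t < length w \<Longrightarrow> bracket_sum i w (Suc t) = bracket_sum i w t + bracket_wt i (w ! t)"
  by (simp add: bracket_sum_def take_Suc_conv_app_nth)

lemma unbracketed_open_Cons:
  "unbracketed_open i d (x # w) (Suc k) \<longleftrightarrow>
   unbracketed_open i (if x = Suc i then Suc d else if x = i then d - 1 else d) w k"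
proof -
  have "(\<forall>q\<le>Suc k. P q) \<longleftrightarrow> P 0 \<and> (\<forall>q\<le>k. P (Suc q))" for P
    by (metis Suc_le_mono le0 not0_implies_Suc)
  then have "(\<forall>q\<le>Suc k. bracket_sum i (x # w) (Suc k) \<le> bracket_sum i (x # w) q) \<longleftrightarrow>
      bracket_wt i x + bracket_sum i w k \<le> 0 \<and> (\<forall>q\<le>k. bracket_sum i w k \<le> bracket_sum i w q)"
    by simp
  moreover have "(\<forall>q\<le>k. bracket_sum i w k \<le> bracket_sum i w q) \<Longrightarrow> bracket_sum i w k \<le> 0"
    by (metis bracket_sum_0 le0)
  ultimately show ?thesis
    unfolding unbracketed_open_def by (auto simp: bracket_wt_def)
qed

lemma unbr_eq_filter:
  "unbr i d w p = map (\<lambda>k. k + p) (filter (\<lambda>k. w ! k = i \<and> unbracketed_open i d w k) [0..<length w])"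
proof (induction w arbitrary: d p)
  case Nil
  then show ?case by simp
next
  case (Cons x w)
  define d' where "d' = (if x = Suc i then Suc d else if x = i then d - 1 else d)"
  have upt: "[0..<length (x # w)] = 0 # map Suc [0..<length w]"
    by (simp add: upt_conv_Cons map_Suc_upt del: upt_Suc)
  have tail: "map (\<lambda>k. k + p)
      (filter (\<lambda>k. (x # w) ! k = i \<and> unbracketed_open i d (x # w) k) (map Suc [0..<length w]))
    = map (\<lambda>k. k + Suc p) (filter (\<lambda>k. w ! k = i \<and> unbracketed_open i d' w k) [0..<length w])"
    by (simp add: filter_map comp_def unbracketed_open_Cons d'_def)
  have "unbr i d (x # w) p = (if x = i \<and> d = 0 then [p] else []) @ unbr i d' w (Suc p)"
    by (simp add: d'_def)
  also have "\<dots> = (if x = i \<and> d = 0 then [p] else []) @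
      map (\<lambda>k. k + Suc p) (filter (\<lambda>k. w ! k = i \<and> unbracketed_open i d' w k) [0..<length w])"
    using Cons.IH by simp
  also have "\<dots> = map (\<lambda>k. k + p)
      (filter (\<lambda>k. (x # w) ! k = i \<and> unbracketed_open i d (x # w) k) [0..<length (x # w)])"
    unfolding upt tail[symmetric] by (simp add: unbracketed_open_def)
  finally show ?case .
qed

lemma unbr_0_eq_filter: "unbr i 0 w 0 = filter (unbracketed i w) [0..<length w]"
proof -
  have "unbracketed_open i 0 w k \<longleftrightarrow> (\<forall>q\<le>k. bracket_sum i w k \<le> bracket_sum i w q)" for k
    unfolding unbracketed_open_def by (metis bracket_sum_0 le0 of_nat_0 add_0)
  then show ?thesis
    unfolding unbr_eq_filter unbracketed_def by (auto intro!: filter_cong)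
qed

lemma last_unbracketed_unique:
  "last_unbracketed i w k \<Longrightarrow> last_unbracketed i w k' \<Longrightarrow> k = k'"
  by (simp add: last_unbracketed_def le_antisym)

lemma f_word_eq:
  "f_word i w = (let ks = filter (unbracketed i w) [0..<length w] in
     if ks = [] then None else Some (w[last ks := Suc i]))"
  unfolding f_word_def unbr_0_eq_filter Let_def by (auto split: list.split)

lemma f_word_eq_None_iff: "f_word i w = None \<longleftrightarrow> (\<forall>k. \<not> unbracketed i w k)"
  unfolding f_word_eq Let_def by (auto simp: filter_empty_conv unbracketed_def)

lemma f_word_eq_Some_iff:
  "f_word i w = Some w' \<longleftrightarrow> (\<exists>k. last_unbracketed i w k \<and> w' = w[k := Suc i])"
proof -
  define ks where "ks = filter (unbracketed i w) [0..<length w]"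
  have set_ks: "set ks = {k. unbracketed i w k}"
    by (auto simp: ks_def unbracketed_def)
  have "sorted ks"
    by (simp add: ks_def sorted_filter[where f = id, simplified])
  then have "k \<le> last ks" if "k \<in> set ks" for k
    using that by (induction ks) auto
  then have last: "last_unbracketed i w (last ks)" if "ks \<noteq> []"
    using that set_ks last_in_set[OF that] by (auto simp: last_unbracketed_def)
  have nonempty: "ks \<noteq> []" if "last_unbracketed i w k" for k
    using that set_ks by (auto simp: last_unbracketed_def)
  show ?thesis
  proof
    assume "f_word i w = Some w'"
    then have "ks \<noteq> []" and "w' = w[last ks := Suc i]"
      by (auto simp: f_word_eq ks_def[symmetric] Let_def split: if_splits)
    with last show "\<exists>k. last_unbracketed i w k \<and> w' = w[k := Suc i]" by blast
  next
    assume "\<exists>k. last_unbracketed i w k \<and> w' = w[k := Suc i]"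
    then obtain k where k: "last_unbracketed i w k" and w': "w' = w[k := Suc i]" by blast
    with nonempty have "ks \<noteq> []" by blast
    with k w' last_unbracketed_unique[OF k last] show "f_word i w = Some w'"
      by (simp add: f_word_eq ks_def[symmetric] Let_def)
  qed
qed

lemma unbracketed_if_no_Suc_before:
  assumes k: "k < length w" "w ! k = i" and before: "\<And>s. s < k \<Longrightarrow> w ! s \<noteq> Suc i"
  shows "unbracketed i w k"
proof -
  have "bracket_sum i w s \<le> bracket_sum i w q" if "q \<le> s" "s \<le> k" for q s
    using that
  proof (induction s rule: dec_induct)
    case (step s)
    then have "bracket_wt i (w ! s) \<le> 0"
      using before by (auto simp: bracket_wt_def)
    with step k show ?case
      using bracket_sum_Suc[of s w i] by simp
  qed simp
  with k show ?thesis
    by (simp add: unbracketed_def)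
qed

lemma bracket_sum_update:
  assumes "x < length w" "w ! x = i" "t \<le> length w"
  shows "bracket_sum i (w[x := Suc i]) t = (if t \<le> x then bracket_sum i w t else bracket_sum i w t + 2)"
  using assms(3)
proof (induction t)
  case 0
  then show ?case by simp
next
  case (Suc t)
  then show ?case
    using assms bracket_sum_Suc[of t w i] bracket_sum_Suc[of t "w[x := Suc i]" i]
    by (auto simp: bracket_wt_def nth_list_update)
qed

text \<open>Otherwise the first position after \<open>x\<close> where the prefix sum drops below its value at
  \<open>Suc x\<close> would carry a later unbracketed \<open>i\<close>.\<close>

lemma bracket_sum_after_last_unbracketed:
  assumes x: "last_unbracketed i w x"
  shows "s \<le> length w \<Longrightarrow> Suc x \<le> t \<Longrightarrow> t \<le> s \<Longrightarrow> bracket_sum i w (Suc x) \<le> bracket_sum i w t"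
proof (induction s arbitrary: t)
  case 0
  then show ?case by simp
next
  case (Suc s)
  show ?case
  proof (cases "t \<le> s \<or> t = Suc x")
    case True
    with Suc show ?thesis by auto
  next
    case False
    with Suc.prems have t: "t = Suc s" and xs: "x < s" and s: "s < length w" by auto
    have before_x: "bracket_sum i w x \<le> bracket_sum i w q" if "q \<le> x" for q
      using x that by (simp add: last_unbracketed_def unbracketed_def)
    have sum_x: "bracket_sum i w (Suc x) = bracket_sum i w x - 1"
      using x bracket_sum_Suc[of x w i]
      by (simp add: last_unbracketed_def unbracketed_def bracket_wt_def)
    have after_x: "bracket_sum i w (Suc x) \<le> bracket_sum i w q" if "Suc x \<le> q" "q \<le> s" for q
      using Suc.IH that s by simp
    show ?thesis
    proof (rule ccontr)
      assume drop: "\<not> ?thesis"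
      have sum_s: "bracket_sum i w (Suc s) = bracket_sum i w s + bracket_wt i (w ! s)"
        using bracket_sum_Suc[OF s] .
      have ws: "w ! s = i" and eq: "bracket_sum i w s = bracket_sum i w (Suc x)"
        using drop sum_s after_x[of s] xs t by (auto simp: bracket_wt_def split: if_splits)
      have "bracket_sum i w s \<le> bracket_sum i w q" if "q \<le> s" for q
      proof (cases "q \<le> x")
        case True
        then show ?thesis using before_x[OF True] sum_x eq by simp
      next
        case False
        then show ?thesis using after_x[of q] that eq by simp
      qed
      with s ws have "unbracketed i w s"
        unfolding unbracketed_def by blast
      then show False
        using x xs by (auto simp: last_unbracketed_def)
    qed
  qed
qed

section \<open>Reversed complemented words\<close>

text \<open>Reversing a word and complementing its letters \<open>v \<mapsto> n + 1 - v\<close> turns \<open>f\<^sub>i\<close> into the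
  raising operator \<open>e\<^sub>n\<^sub>-\<^sub>i\<close>; this is the word version of the Lusztig involution.\<close>

definition dual_word :: "nat \<Rightarrow> nat list \<Rightarrow> nat list" where
  "dual_word n w = rev (map (\<lambda>v. Suc n - v) w)"

lemma length_dual_word [simp]: "length (dual_word n w) = length w"
  by (simp add: dual_word_def)

lemma nth_dual_word: "t < length w \<Longrightarrow> dual_word n w ! t = Suc n - w ! (length w - Suc t)"
  by (simp add: dual_word_def rev_nth)

lemma dual_word_list_update:
  "x < length w \<Longrightarrow> dual_word n (w[x := v]) = (dual_word n w)[length w - Suc x := Suc n - v]"
  by (simp add: dual_word_def rev_update map_update)

lemma bracket_wt_dual:
  "1 \<le> i \<Longrightarrow> i < n \<Longrightarrow> u \<le> n \<Longrightarrow> bracket_wt (n - i) (Suc n - u) = - bracket_wt i u"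
  by (auto simp: bracket_wt_def)

lemma bracket_sum_dual_word:
  assumes i: "1 \<le> i" "i < n" and w: "\<forall>u\<in>set w. u \<le> n" and q: "q \<le> length w"
  shows "bracket_sum (n - i) (dual_word n w) q = bracket_sum i w (length w - q) - bracket_sum i w (length w)"
proof -
  let ?d = "drop (length w - q) w"
  have "take q (dual_word n w) = rev (map (\<lambda>v. Suc n - v) ?d)"
    unfolding dual_word_def by (simp add: take_rev drop_map)
  then have "bracket_sum (n - i) (dual_word n w) q = sum_list (map (\<lambda>u. bracket_wt (n - i) (Suc n - u)) ?d)"
    unfolding bracket_sum_def by (simp add: rev_map[symmetric] comp_def)
  also have "\<dots> = sum_list (map (\<lambda>u. - bracket_wt i u) ?d)"
    using i w set_drop_subset[of "length w - q" w]
    by (intro arg_cong[where f = sum_list] map_cong) (auto simp: bracket_wt_dual)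
  also have "\<dots> = - sum_list (map (bracket_wt i) ?d)"
    by (simp add: uminus_sum_list_map comp_def)
  also have "\<dots> = bracket_sum i w (length w - q) - bracket_sum i w (length w)"
  proof -
    have "sum_list (map (bracket_wt i) (take (length w - q) w)) + sum_list (map (bracket_wt i) ?d)
        = sum_list (map (bracket_wt i) w)"
      by (metis append_take_drop_id map_append sum_list_append)
    then show ?thesis
      unfolding bracket_sum_def by simp
  qed
  finally show ?thesis .
qed

lemma bracket_sum_dual_word_update:
  assumes x: "x < length w" "w ! x = i" and i: "1 \<le> i" "i < n" and w: "\<forall>u\<in>set w. u \<le> n"
    and q: "q \<le> length w"
  shows "bracket_sum (n - i) (dual_word n (w[x := Suc i])) q =
    bracket_sum i w (length w - q) - bracket_sum i w (length w) - (if length w - q \<le> x then 2 else 0)"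
proof -
  have "\<forall>u\<in>set (w[x := Suc i]). u \<le> n"
    using w i set_update_subset_insert[of w x "Suc i"] by auto
  then show ?thesis
    using bracket_sum_dual_word[OF i, of "w[x := Suc i]" q] q x
      bracket_sum_update[OF x, of "length w - q"] bracket_sum_update[OF x, of "length w"]
    by simp
qed

lemma unbracketed_dual_word_update:
  assumes x: "last_unbracketed i w x" and i: "1 \<le> i" "i < n" and w: "\<forall>u\<in>set w. u \<le> n"
  shows "unbracketed (n - i) (dual_word n (w[x := Suc i])) (length w - Suc x)"
  unfolding unbracketed_def
proof (intro conjI allI impI)
  have xw: "x < length w" "w ! x = i"
    using x by (auto simp: last_unbracketed_def unbracketed_def)
  then show "length w - Suc x < length (dual_word n (w[x := Suc i]))"
    and "dual_word n (w[x := Suc i]) ! (length w - Suc x) = n - i"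
    using i by (simp_all add: nth_dual_word)
  fix q
  assume q: "q \<le> length w - Suc x"
  then have "bracket_sum i w (Suc x) \<le> bracket_sum i w (length w - q)"
    using bracket_sum_after_last_unbracketed[OF x, of "length w" "length w - q"] xw by simp
  moreover have "\<not> length w - q \<le> x"
    using q xw by linarith
  ultimately show "bracket_sum (n - i) (dual_word n (w[x := Suc i])) (length w - Suc x)
      \<le> bracket_sum (n - i) (dual_word n (w[x := Suc i])) q"
    using q xw bracket_sum_dual_word_update[OF xw i w] by (simp add: Suc_diff_Suc)
qed

lemma unbracketed_dual_word_update_le:
  assumes x: "unbracketed i w x" and i: "1 \<le> i" "i < n" and w: "\<forall>u\<in>set w. u \<le> n"
    and t: "unbracketed (n - i) (dual_word n (w[x := Suc i])) t"
  shows "t \<le> length w - Suc x"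
proof (rule ccontr)
  assume "\<not> ?thesis"
  then have tx: "length w - Suc x < t"
    by simp
  have xw: "x < length w" "w ! x = i"
    and before_x: "\<And>q. q \<le> x \<Longrightarrow> bracket_sum i w x \<le> bracket_sum i w q"
    using x by (auto simp: unbracketed_def)
  have tw: "t < length w" and dt: "dual_word n (w[x := Suc i]) ! t = n - i"
    and min_t: "bracket_sum (n - i) (dual_word n (w[x := Suc i])) t
      \<le> bracket_sum (n - i) (dual_word n (w[x := Suc i])) (length w - x)"
    using t tx by (auto simp: unbracketed_def)
  define y where "y = length w - Suc t"
  have yx: "y < x"
    using tx tw by (simp add: y_def)
  have "w ! y \<le> n"
    using w tw by (simp add: y_def)
  then have wy: "w ! y = Suc i"
    using dt i tw yx nth_dual_word[of t "w[x := Suc i]" n] by (simp add: y_def)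
  have "length w - t \<le> x"
    using tx by linarith
  then have "bracket_sum i w (Suc y) \<le> bracket_sum i w x"
    using min_t tw xw bracket_sum_dual_word_update[OF xw i w]
    by (simp add: y_def Suc_diff_Suc)
  moreover have "bracket_sum i w (Suc y) = bracket_sum i w y + 1"
    using bracket_sum_Suc[of y w i] yx xw wy by (simp add: bracket_wt_def)
  ultimately show False
    using before_x[of y] yx by simp
qed

lemma f_word_dual_word:
  assumes f: "f_word i w = Some w'" and i: "1 \<le> i" "i < n" and w: "\<forall>u\<in>set w. u \<le> n"
  shows "f_word (n - i) (dual_word n w') = Some (dual_word n w)"
proof -
  obtain x where x: "last_unbracketed i w x" and w': "w' = w[x := Suc i]"
    using f by (auto simp: f_word_eq_Some_iff)
  have xw: "x < length w" and "w ! x = i"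
    using x by (auto simp: last_unbracketed_def unbracketed_def)
  then have "dual_word n w ! (length w - Suc x) = Suc (n - i)"
    using i by (simp add: nth_dual_word Suc_diff_Suc Suc_diff_le)
  then have "(dual_word n w')[length w - Suc x := Suc (n - i)] = dual_word n w"
    using xw list_update_id[of "dual_word n w" "length w - Suc x"]
    by (simp add: w' dual_word_list_update)
  moreover have "last_unbracketed (n - i) (dual_word n w') (length w - Suc x)"
    using unbracketed_dual_word_update[OF x i w] unbracketed_dual_word_update_le[OF _ i w] x
    by (auto simp: last_unbracketed_def w')
  ultimately show ?thesis
    by (auto simp: f_word_eq_Some_iff)
qed

section \<open>Crystal operators on tableaux\<close>

lemma SSYT_outside: "b \<in> SSYT la n \<Longrightarrow> p \<notin> cells la \<Longrightarrow> b p = 0"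
  unfolding SSYT_def by blast

lemma SSYT_row_mono:
  assumes b: "b \<in> SSYT la n" and cell: "(r, c') \<in> cells la" and "c \<le> c'"
  shows "b (r, c) \<le> b (r, c')"
  using \<open>c \<le> c'\<close> cell
proof (induction c' rule: dec_induct)
  case (step c')
  then have "(r, c') \<in> cells la"
    by (auto simp: cells_def)
  with step b show ?case
    by (fastforce simp: SSYT_def)
qed simp

lemma row_word_le: "b \<in> SSYT la n \<Longrightarrow> \<forall>u\<in>set (row_word la b). u \<le> n"
  unfolding row_word_eq_map using set_reading_cells by (auto simp: SSYT_def)

lemma unbracketed_row_wordD:
  "unbracketed i (row_word la b) k \<Longrightarrow> k < sum_list la \<and> b (reading_cells la ! k) = i"
  unfolding unbracketed_def row_word_eq_map by auto

lemma bracket_sum_row_word: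
  "t \<le> sum_list la \<Longrightarrow> bracket_sum i (row_word la b) t = (\<Sum>s<t. bracket_wt i (b (reading_cells la ! s)))"
proof (induction t)
  case (Suc t)
  then show ?case
    using bracket_sum_Suc[of t "row_word la b" i] by (simp add: row_word_eq_map)
qed simp

lemma bracket_sum_row_word_diff:
  assumes "k0 \<le> k" "k \<le> sum_list la"
  shows "bracket_sum i (row_word la b) k - bracket_sum i (row_word la b) k0 =
    (\<Sum>p\<in>(!) (reading_cells la) ` {k0..<k}. bracket_wt i (b p))"
proof -
  have "inj_on ((!) (reading_cells la)) {k0..<k}"
    using assms reading_cells_nth_inj[of _ la] by (intro inj_onI) auto
  then have "(\<Sum>p\<in>(!) (reading_cells la) ` {k0..<k}. bracket_wt i (b p)) =
      (\<Sum>s\<in>{k0..<k}. bracket_wt i (b (reading_cells la ! s)))"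
    by (simp add: sum.reindex)
  moreover have "(\<Sum>s<k. bracket_wt i (b (reading_cells la ! s))) =
      (\<Sum>s<k0. bracket_wt i (b (reading_cells la ! s))) + (\<Sum>s\<in>{k0..<k}. bracket_wt i (b (reading_cells la ! s)))"
    using assms by (metis atLeast0LessThan sum.atLeastLessThan_concat le0)
  ultimately show ?thesis
    using assms bracket_sum_row_word[of k la i b] bracket_sum_row_word[of k0 la i b] by simp
qed

lemma reading_cells_segment:
  assumes k0: "k0 < sum_list la" "reading_cells la ! k0 = (Suc r, a)"
    and k: "k < sum_list la" "reading_cells la ! k = (r, c)"
  shows "(!) (reading_cells la) ` {k0..<k} = Pair (Suc r) ` {a..<la ! Suc r} \<union> Pair r ` {0..<c}"
proof
  show "(!) (reading_cells la) ` {k0..<k} \<subseteq> Pair (Suc r) ` {a..<la ! Suc r} \<union> Pair r ` {0..<c}"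
  proof
    fix p
    assume "p \<in> (!) (reading_cells la) ` {k0..<k}"
    then obtain s where s: "k0 \<le> s" "s < k" and p: "p = reading_cells la ! s"
      by auto
    have "p \<in> cells la"
      using reading_cells_nth_in_cells[of s la] s k p by simp
    moreover have "p = (Suc r, a) \<or> read_before (Suc r, a) p"
      using s k0 k p read_before_reading_cells_iff[of k0 la s] by (cases "k0 = s") auto
    moreover have "read_before p (r, c)"
      using s k p read_before_reading_cells_iff[of s la k] by simp
    ultimately show "p \<in> Pair (Suc r) ` {a..<la ! Suc r} \<union> Pair r ` {0..<c}"
      by (cases p) (auto simp: read_before_def cells_def)
  qed
next
  show "Pair (Suc r) ` {a..<la ! Suc r} \<union> Pair r ` {0..<c} \<subseteq> (!) (reading_cells la) ` {k0..<k}"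
  proof
    fix p
    assume p: "p \<in> Pair (Suc r) ` {a..<la ! Suc r} \<union> Pair r ` {0..<c}"
    have "(Suc r, a) \<in> cells la" and "(r, c) \<in> cells la"
      using k0 k reading_cells_nth_in_cells by metis+
    with p have "p \<in> cells la"
      by (auto simp: cells_def)
    then obtain s where s: "s < sum_list la" "reading_cells la ! s = p"
      by (rule cells_reading_indexE)
    have "p = (Suc r, a) \<or> read_before (Suc r, a) p" and "read_before p (r, c)"
      using p by (auto simp: read_before_def)
    then have "k0 \<le> s" and "s < k"
      using read_before_reading_cells_iff[of k0 la s] read_before_reading_cells_iff[of s la k]
        reading_cells_nth_inj[of k0 la s] k0 k s by (auto simp: le_less)
    with s show "p \<in> (!) (reading_cells la) ` {k0..<k}"
      by auto
  qed
qed

lemma sum_bracket_wt_ge_run: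
  assumes "c < M" and run: "\<And>a'. a \<le> a' \<Longrightarrow> a' \<le> c \<Longrightarrow> g a' = Suc i"
    and larger: "\<And>a'. a \<le> a' \<Longrightarrow> a' < M \<Longrightarrow> Suc i \<le> g a'"
  shows "int (Suc c - a) \<le> (\<Sum>a'\<in>{a..<M}. bracket_wt i (g a'))"
proof -
  have "int (Suc c - a) = (\<Sum>a'\<in>{a..<Suc c}. bracket_wt i (g a'))"
    using run by (simp add: bracket_wt_def)
  also have "\<dots> \<le> (\<Sum>a'\<in>{a..<M}. bracket_wt i (g a'))"
  proof (rule sum_mono2)
    fix a'
    assume "a' \<in> {a..<M} - {a..<Suc c}"
    then have "Suc i \<le> g a'"
      using larger by simp
    then show "0 \<le> bracket_wt i (g a')"
      by (simp add: bracket_wt_def)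
  qed (use \<open>c < M\<close> in auto)
  finally show ?thesis .
qed

lemma sum_bracket_wt_eq_run:
  assumes "a \<le> c" and smaller: "\<And>a'. a' < a \<Longrightarrow> g a' < i"
    and run: "\<And>a'. a \<le> a' \<Longrightarrow> a' < c \<Longrightarrow> g a' = i"
  shows "(\<Sum>a'\<in>{0..<c}. bracket_wt i (g a')) = - int (c - a)"
proof -
  have "bracket_wt i (g a') = 0" if "a' < a" for a'
    using smaller[OF that] by (simp add: bracket_wt_def)
  then have "(\<Sum>a'\<in>{0..<a}. bracket_wt i (g a')) = 0"
    by simp
  moreover have "(\<Sum>a'\<in>{a..<c}. bracket_wt i (g a')) = (\<Sum>a'\<in>{a..<c}. - 1)"
    using run by (intro sum.cong) (auto simp: bracket_wt_def)
  ultimately show ?thesis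
    using \<open>a \<le> c\<close> by (simp add: sum.atLeastLessThan_concat[symmetric, of 0 a c])
qed

lemma sum_bracket_wt_two_row_segment_pos:
  assumes b: "b \<in> SSYT la n" and cells: "(r, c) \<in> cells la" "(Suc r, c) \<in> cells la"
    and bc: "b (r, c) = i" and buc: "b (Suc r, c) = Suc i"
    and a: "a \<le> c" "b (r, a) = i" and left_of_a: "\<And>a'. a' < a \<Longrightarrow> b (r, a') < i"
  shows "0 < (\<Sum>p\<in>Pair (Suc r) ` {a..<la ! Suc r} \<union> Pair r ` {0..<c}. bracket_wt i (b p))"
proof -
  have lower_run: "b (r, a') = i" if "a \<le> a'" "a' \<le> c" for a'
  proof -
    have "(r, a') \<in> cells la"
      using cells(1) that by (auto simp: cells_def)
    then have "b (r, a) \<le> b (r, a')"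
      using SSYT_row_mono[OF b] that(1) by blast
    moreover have "b (r, a') \<le> b (r, c)"
      using SSYT_row_mono[OF b cells(1)] that(2) by blast
    ultimately show ?thesis
      using a bc by simp
  qed
  have upper_run: "b (Suc r, a') = Suc i" if "a \<le> a'" "a' \<le> c" for a'
  proof -
    have "(Suc r, a') \<in> cells la"
      using cells(2) that by (auto simp: cells_def)
    then have "b (r, a') < b (Suc r, a')"
      using b by (auto simp: SSYT_def)
    moreover have "b (Suc r, a') \<le> b (Suc r, c)"
      using SSYT_row_mono[OF b cells(2)] that by blast
    ultimately show ?thesis
      using lower_run[OF that] buc by simp
  qed
  have upper_larger: "Suc i \<le> b (Suc r, a')" if "a \<le> a'" "a' < la ! Suc r" for a'
  proof -
    have "(Suc r, a') \<in> cells la"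
      using cells(2) that(2) by (simp add: cells_def)
    then have "b (Suc r, a) \<le> b (Suc r, a')"
      using SSYT_row_mono[OF b _ that(1)] by blast
    with upper_run[of a] a show ?thesis
      by simp
  qed
  have "int (Suc c - a) \<le> (\<Sum>a'\<in>{a..<la ! Suc r}. bracket_wt i (b (Suc r, a')))"
    using cells(2) upper_run upper_larger by (intro sum_bracket_wt_ge_run) (simp_all add: cells_def)
  moreover have "(\<Sum>a'\<in>{0..<c}. bracket_wt i (b (r, a'))) = - int (c - a)"
    using a(1) left_of_a lower_run by (intro sum_bracket_wt_eq_run) simp_all
  moreover have "(\<Sum>p\<in>Pair r' ` A. bracket_wt i (b p)) = (\<Sum>a'\<in>A. bracket_wt i (b (r', a')))"
    for r' A
    by (subst sum.reindex) (auto simp: inj_on_def)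
  moreover have "Pair (Suc r) ` {a..<la ! Suc r} \<inter> Pair r ` {0..<c} = {}"
    by auto
  ultimately show ?thesis
    using a by (simp add: sum.union_disjoint)
qed

lemma unbracketed_above_ne:
  assumes b: "b \<in> SSYT la n" and k: "unbracketed i (row_word la b) k"
    and p: "reading_cells la ! k = (r, c)" and up: "(Suc r, c) \<in> cells la"
  shows "b (Suc r, c) \<noteq> Suc i"
proof
  assume buc: "b (Suc r, c) = Suc i"
  have kN: "k < sum_list la" and bc: "b (r, c) = i"
    using unbracketed_row_wordD[OF k] p by simp_all
  have rc: "(r, c) \<in> cells la"
    using reading_cells_nth_in_cells[OF kN] p by simp
  define a where "a = (LEAST a. b (r, a) = i)"
  have a: "a \<le> c" "b (r, a) = i"
    unfolding a_def using bc by (rule Least_le, rule LeastI)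
  have left_of_a: "b (r, a') < i" if "a' < a" for a'
  proof -
    have "b (r, a') \<noteq> i"
      using that unfolding a_def by (rule not_less_Least)
    moreover have "b (r, a') \<le> b (r, c)"
      using SSYT_row_mono[OF b rc] that a(1) by simp
    ultimately show ?thesis
      using bc by simp
  qed
  have "(Suc r, a) \<in> cells la"
    using up a(1) by (simp add: cells_def)
  then obtain k0 where k0: "k0 < sum_list la" "reading_cells la ! k0 = (Suc r, a)"
    by (rule cells_reading_indexE)
  have "k0 < k"
    using read_before_reading_cells_iff[OF k0(1) kN] k0 p by (simp add: read_before_def)
  then have "bracket_sum i (row_word la b) k \<le> bracket_sum i (row_word la b) k0"
    using k by (simp add: unbracketed_def)
  then have "(\<Sum>p\<in>(!) (reading_cells la) ` {k0..<k}. bracket_wt i (b p)) \<le> 0"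
    using bracket_sum_row_word_diff[of k0 k la i b] \<open>k0 < k\<close> kN by simp
  then show False
    using sum_bracket_wt_two_row_segment_pos[OF b rc up bc buc a left_of_a]
    by (simp add: reading_cells_segment[OF k0 kN p])
qed

lemma last_unbracketed_right_ne:
  assumes k: "last_unbracketed i (row_word la b) k"
    and p: "reading_cells la ! k = (r, c)" and right: "(r, Suc c) \<in> cells la"
  shows "b (r, Suc c) \<noteq> i"
proof
  assume bc': "b (r, Suc c) = i"
  have kN: "k < sum_list la" and bc: "b (r, c) = i"
    using unbracketed_row_wordD[of i la b k] k p by (auto simp: last_unbracketed_def)
  have next_cell: "Suc k < sum_list la" "reading_cells la ! Suc k = (r, Suc c)"
    using reading_cells_Suc[OF kN p right] by simp_all
  have min_k: "bracket_sum i (row_word la b) k \<le> bracket_sum i (row_word la b) q" if "q \<le> k" for q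
    using k that by (simp add: last_unbracketed_def unbracketed_def)
  have "bracket_sum i (row_word la b) (Suc k) = bracket_sum i (row_word la b) k - 1"
    using bracket_sum_Suc[of k "row_word la b" i] kN p bc
    by (simp add: row_word_eq_map bracket_wt_def)
  then have "bracket_sum i (row_word la b) (Suc k) \<le> bracket_sum i (row_word la b) q" if "q \<le> Suc k" for q
    using min_k[of q] that by (cases "q = Suc k") auto
  with next_cell bc' have "unbracketed i (row_word la b) (Suc k)"
    by (simp add: unbracketed_def row_word_eq_map)
  with k show False
    by (auto simp: last_unbracketed_def)
qed

lemma SSYT_update_last_unbracketed:
  assumes b: "b \<in> SSYT la n" and i: "i < n" and k: "last_unbracketed i (row_word la b) k"
  shows "b(reading_cells la ! k := Suc i) \<in> SSYT la n"
proof -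
  obtain r c where p: "reading_cells la ! k = (r, c)"
    by (cases "reading_cells la ! k")
  have kN: "k < sum_list la" and bc: "b (r, c) = i"
    using unbracketed_row_wordD[of i la b k] k p by (auto simp: last_unbracketed_def)
  have rc: "(r, c) \<in> cells la"
    using reading_cells_nth_in_cells[OF kN] p by simp
  have right: "i < b (r, Suc c)" if "(r, Suc c) \<in> cells la"
    using last_unbracketed_right_ne[OF k p that] b that bc by (force simp: SSYT_def le_less)
  have up: "Suc i < b (Suc r, c)" if "(Suc r, c) \<in> cells la"
    using unbracketed_above_ne[OF b _ p that] k b that bc
    by (force simp: SSYT_def last_unbracketed_def)
  have row: "b (r', c') \<le> b (r', Suc c')" if "(r', Suc c') \<in> cells la" for r' c'
    using b that by (auto simp: SSYT_def)
  have col: "b (r', c') < b (Suc r', c')" if "(Suc r', c') \<in> cells la" for r' c'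
    using b that by (auto simp: SSYT_def)
  show ?thesis
    unfolding SSYT_def p
  proof (intro CollectI conjI allI impI ballI)
    fix r' c'
    assume "(r', Suc c') \<in> cells la"
    then show "(b((r, c) := Suc i)) (r', c') \<le> (b((r, c) := Suc i)) (r', Suc c')"
      using row[of r' c'] right bc by auto
  next
    fix r' c'
    assume "(Suc r', c') \<in> cells la"
    then show "(b((r, c) := Suc i)) (r', c') < (b((r, c) := Suc i)) (Suc r', c')"
      using col[of r' c'] up bc by auto
  qed (use b i rc in \<open>auto simp: SSYT_def\<close>)
qed

lemma crystal_f_last_unbracketed:
  assumes b: "b \<in> SSYT la n" and i: "i < n" and k: "last_unbracketed i (row_word la b) k"
  shows "b(reading_cells la ! k := Suc i) \<in> SSYT la n"
    and "crystal_f la i b (b(reading_cells la ! k := Suc i))"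
  using SSYT_update_last_unbracketed[OF assms] k unbracketed_row_wordD[of i la b k]
  by (auto simp: crystal_f_def f_word_eq_Some_iff row_word_upd last_unbracketed_def)

lemma crystal_fE:
  assumes b: "b \<in> SSYT la n" and b': "b' \<in> SSYT la n" and f: "crystal_f la i b b'"
  obtains k where "last_unbracketed i (row_word la b) k" and "b' = b(reading_cells la ! k := Suc i)"
proof -
  obtain k where k: "last_unbracketed i (row_word la b) k"
    and w: "row_word la b' = (row_word la b)[k := Suc i]"
    using f by (auto simp: crystal_f_def f_word_eq_Some_iff)
  have kN: "k < sum_list la"
    using k unbracketed_row_wordD by (auto simp: last_unbracketed_def)
  have "b' p = (b(reading_cells la ! k := Suc i)) p" for p
  proof (cases "p \<in> cells la")
    case True
    have "map b' (reading_cells la) = map (b(reading_cells la ! k := Suc i)) (reading_cells la)"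
      using w kN by (simp add: row_word_eq_map map_upd_reading_cells)
    with True show ?thesis
      by (simp add: set_reading_cells[symmetric])
  next
    case False
    with b b' reading_cells_nth_in_cells[OF kN] show ?thesis
      by (auto simp: SSYT_outside)
  qed
  with k that show ?thesis
    by blast
qed

section \<open>Shapes that are not rectangles\<close>

lemma last_unbracketed_ge_if_no_larger_letter:
  assumes w: "\<forall>u\<in>set w. u \<le> i" and k: "last_unbracketed i w k"
    and t: "t < length w" "w ! t = i"
  shows "t \<le> k"
proof -
  have "w ! s \<noteq> Suc i" if "s < t" for s
    using w nth_mem[of s w] that t(1) by fastforce
  with t have "unbracketed i w t"
    by (intro unbracketed_if_no_Suc_before)
  with k show ?thesis
    by (simp add: last_unbracketed_def)
qed

lemma std_eq_size_upd_larger: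
  assumes q: "q \<in> cells la" "q \<noteq> x" and v: "b x \<le> v"
    and std: "std la (b(x := v)) q = sum_list la"
  shows "std la b q = sum_list la"
proof -
  have "std_less (b(x := v)) p q" if "p \<in> cells la" "p \<noteq> q" for p
    using std std_eq_size_iff[OF q(1)] that by blast
  then have "std_less b p q" if "p \<in> cells la" "p \<noteq> q" for p
    using that q(2) v by (fastforce simp: std_less_def split: if_splits)
  then show ?thesis
    using std_eq_size_iff[OF q(1)] by blast
qed

lemma std_eq_size_upd_max:
  assumes p: "p \<in> cells la" and v: "\<forall>q\<in>cells la. q \<noteq> p \<longrightarrow> b q < v"
    and q: "q \<in> cells la" "std la (b(p := v)) q = sum_list la"
  shows "q = p"
proof (rule ccontr)
  assume "q \<noteq> p"
  moreover have "\<forall>p'\<in>cells la. p' \<noteq> q \<longrightarrow> std_less (b(p := v)) p' q"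
    using std_eq_size_iff[OF q(1)] q(2) by blast
  ultimately have "std_less (b(p := v)) p q"
    using p by auto
  with \<open>q \<noteq> p\<close> v q(1) show False
    by (auto simp: std_less_def)
qed

lemma std_max_crystal_f_read_before:
  assumes k: "last_unbracketed i (row_word la b) k" and x: "x = reading_cells la ! k"
    and q: "q \<in> cells la" "std la b q = sum_list la" "q \<noteq> x"
    and x_max: "std la (b(x := Suc i)) x = sum_list la"
  shows "read_before q x"
proof -
  have kN: "k < sum_list la" and bx: "b x = i"
    using unbracketed_row_wordD[of i la b k] k by (auto simp: x last_unbracketed_def)
  have x_cell: "x \<in> cells la"
    using reading_cells_nth_in_cells[OF kN] by (simp add: x)
  have q_max: "std_less b p q" if "p \<in> cells la" "p \<noteq> q" for p
    using std_eq_size_iff[OF q(1)] q(2) that by blast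
  have "std_less (b(x := Suc i)) q x"
    using std_eq_size_iff[OF x_cell] x_max q(1,3) by blast
  then have bq: "b q < Suc i \<or> (b q = Suc i \<and> read_before q x)"
    using q(3) by (simp add: std_less_def)
  have "std_less b x q"
    using q_max x_cell q(3) by blast
  then have bq': "i < b q \<or> (b q = i \<and> read_before x q)"
    by (auto simp: std_less_def bx)
  have not_later: False if "b q = i" "read_before x q"
  proof -
    have "b p \<le> i" if "p \<in> cells la" for p
      using q_max[OF that] \<open>b q = i\<close> by (cases "p = q") (auto simp: std_less_def)
    then have "\<forall>u\<in>set (row_word la b). u \<le> i"
      by (auto simp: row_word_eq_map set_reading_cells)
    moreover obtain s where s: "s < sum_list la" "reading_cells la ! s = q"
      using cells_reading_indexE[OF q(1)] .
    ultimately have "s \<le> k"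
      using last_unbracketed_ge_if_no_larger_letter[OF _ k, of s] \<open>b q = i\<close>
      by (simp add: row_word_eq_map)
    with \<open>read_before x q\<close> s kN show False
      using read_before_reading_cells_iff[of k la s] by (simp add: x)
  qed
  show ?thesis
    using bq bq' not_later by (auto simp: less_Suc_eq)
qed

lemma CS_edge_max_row_le:
  assumes e: "(T, T') \<in> CS_edges la n"
    and q': "q' \<in> cells la" "T' q' = sum_list la"
  obtains q where "q \<in> cells la" and "T q = sum_list la" and "fst q' \<le> fst q"
proof -
  obtain b b' i where b: "b \<in> SSYT la n" and b': "b' \<in> SSYT la n"
    and T: "std la b = T" and T': "std la b' = T'" and f: "crystal_f la i b b'"
    using e unfolding CS_edges_def by blast
  obtain k where k: "last_unbracketed i (row_word la b) k"
    and b'_eq: "b' = b(reading_cells la ! k := Suc i)"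
    using crystal_fE[OF b b' f] .
  define x where "x = reading_cells la ! k"
  have bx: "b x = i"
    using unbracketed_row_wordD[of i la b k] k by (auto simp: x_def last_unbracketed_def)
  obtain q where q: "q \<in> cells la" "std la b q = sum_list la"
    using std_eq_sizeE[of la b] q' by blast
  show ?thesis
  proof (cases "q' = x \<and> q \<noteq> x")
    case True
    then have "read_before q x"
      using std_max_crystal_f_read_before[OF k x_def q] q' T' b'_eq by (simp add: x_def)
    then have "fst q' \<le> fst q"
      using True by (auto simp: read_before_def)
    with that q T show ?thesis
      by blast
  next
    case False
    then have "std la b q' = sum_list la"
      using std_eq_size_upd_larger[of q' la x b "Suc i"] q' q b'_eq bx T'
      by (auto simp: x_def)
    with that q' T show ?thesis
      by blast
  qed
qed

lemma CS_path_max_row_le: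
  assumes "(T, T') \<in> (CS_edges la n)\<^sup>*"
  shows "q' \<in> cells la \<Longrightarrow> T' q' = sum_list la \<Longrightarrow> \<exists>q\<in>cells la. T q = sum_list la \<and> fst q' \<le> fst q"
  using assms
proof (induction arbitrary: q' rule: rtrancl_induct)
  case (step T' T'')
  obtain q where "q \<in> cells la" "T' q = sum_list la" "fst q' \<le> fst q"
    using CS_edge_max_row_le[OF step.hyps(2) step.prems] .
  with step.IH show ?case
    by (meson order_trans)
qed auto

lemma not_rectangleE:
  assumes la: "is_partition la" and not_rect: "\<not> is_rectangle la"
  obtains r where "Suc r < length la" and "la ! Suc r < la ! r"
proof -
  have "la ! Suc r \<le> la ! r" if "Suc r < length la" for r
    using la sorted_wrt_nth_less[of "(\<ge>)" la r "Suc r"] that by (simp add: is_partition_def)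
  moreover have "la \<noteq> replicate (length la) (la ! 0)"
    using not_rect by (auto simp: is_rectangle_def)
  then obtain r where "r < length la" "la ! r \<noteq> la ! 0"
    by (auto simp: list_eq_iff_nth_eq)
  then have "\<exists>r. Suc r < length la \<and> la ! Suc r \<noteq> la ! r"
  proof (induction r)
    case (Suc r)
    then show ?case by (metis Suc_lessD)
  qed simp
  ultimately show ?thesis
    using that by (meson le_neq_implies_less)
qed

lemma length_plus_nth_le_sum_list:
  "0 \<notin> set la \<Longrightarrow> r < length la \<Longrightarrow> length la + la ! r \<le> Suc (sum_list la)"
proof (induction la arbitrary: r)
  case (Cons x la)
  then have x: "0 < x"
    by auto
  show ?case
  proof (cases r)
    case 0
    have "length la \<le> sum_list la"
      using Cons.prems(1) by (induction la) (auto simp: Suc_le_eq)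
    then show ?thesis
      by (simp add: 0)
  next
    case (Suc r')
    then have "length la + la ! r' \<le> Suc (sum_list la)"
      using Cons by simp
    with x show ?thesis
      by (simp add: Suc)
  qed
qed simp

definition row_filling :: "nat list \<Rightarrow> nat \<times> nat \<Rightarrow> nat" where
  "row_filling la p = (if p \<in> cells la then Suc (fst p) else 0)"

lemma row_filling_upd_SSYT:
  assumes la: "is_partition la" and n: "Suc (length la) \<le> n"
    and corner: "r < length la" "0 < la ! r" "Suc r < length la \<Longrightarrow> la ! Suc r < la ! r"
  shows "(row_filling la)((r, la ! r - 1) := Suc (length la)) \<in> SSYT la n"
proof -
  have row: "fst p < length la" if "p \<in> cells la" for p
    using that by (auto simp: cells_def)
  have not_corner_left: "(r', c) \<noteq> (r, la ! r - 1)" if "(r', Suc c) \<in> cells la" for r' c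
    using that by (auto simp: cells_def)
  have not_corner_below: "(r', c) \<noteq> (r, la ! r - 1)" if "(Suc r', c) \<in> cells la" for r' c
    using that corner(3) by (auto simp: cells_def)
  show ?thesis
    unfolding SSYT_def
  proof (intro CollectI conjI allI impI ballI)
    fix r' c
    assume "(r', Suc c) \<in> cells la"
    then show "((row_filling la)((r, la ! r - 1) := Suc (length la))) (r', c)
        \<le> ((row_filling la)((r, la ! r - 1) := Suc (length la))) (r', Suc c)"
      using not_corner_left row by (auto simp: row_filling_def cells_def)
  next
    fix r' c
    assume "(Suc r', c) \<in> cells la"
    moreover have "(r', c) \<in> cells la"
      using partition_cell_below[OF la] calculation .
    ultimately show "((row_filling la)((r, la ! r - 1) := Suc (length la))) (r', c)
        < ((row_filling la)((r, la ! r - 1) := Suc (length la))) (Suc r', c)"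
      using not_corner_below[of r' c] row by (auto simp: row_filling_def)
  qed (use corner n row in \<open>auto simp: row_filling_def cells_def\<close>)
qed

lemma row_filling_SSYT:
  assumes la: "is_partition la" and n: "length la \<le> n"
  shows "row_filling la \<in> SSYT la n"
  unfolding SSYT_def
proof (intro CollectI conjI allI impI ballI)
  fix r c
  assume "(Suc r, c) \<in> cells la"
  then show "row_filling la (r, c) < row_filling la (Suc r, c)"
    using partition_cell_below[OF la] by (simp add: row_filling_def)
qed (use n in \<open>auto simp: row_filling_def cells_def\<close>)

lemma std_row_filling_max_top_row:
  assumes top: "(length la - 1, 0) \<in> cells la"
    and q: "q \<in> cells la" "std la (row_filling la) q = sum_list la"
  shows "length la - 1 \<le> fst q"
proof (cases "q = (length la - 1, 0)")
  case False
  then have "std_less (row_filling la) (length la - 1, 0) q"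
    using std_eq_size_iff[OF q(1), of "row_filling la"] q(2) top by auto
  with top q(1) show ?thesis
    by (auto simp: std_less_def row_filling_def)
qed simp

lemma not_rectangle_not_strongly_connected:
  assumes la: "is_partition la" and n: "sum_list la \<le> n" and not_rect: "\<not> is_rectangle la"
  shows "\<not> strongly_connected_on (SYT la) (CS_edges la n)"
proof
  assume sc: "strongly_connected_on (SYT la) (CS_edges la n)"
  obtain r where r: "Suc r < length la" "la ! Suc r < la ! r"
    using not_rectangleE[OF la not_rect] .
  define l where "l = length la"
  define corner where "corner = (r, la ! r - 1)"
  define b where "b = (row_filling la)(corner := Suc l)"
  have nonzero: "0 \<notin> set la"
    using la by (simp add: is_partition_def)
  have "0 < la ! Suc r" and top: "(l - 1, 0) \<in> cells la"
    using partition_nth_pos[OF la] r(1) by (simp_all add: l_def cells_def)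
  then have "Suc l \<le> n"
    using length_plus_nth_le_sum_list[OF nonzero, of r] r n by (simp add: l_def)
  then have b: "b \<in> SSYT la n" and top_filling: "row_filling la \<in> SSYT la n"
    using row_filling_upd_SSYT[OF la, of n r] row_filling_SSYT[OF la, of n] r
    by (simp_all add: b_def corner_def l_def)
  have "(std la b, std la (row_filling la)) \<in> (CS_edges la n)\<^sup>*"
    using sc std_in_SYT[OF la b] std_in_SYT[OF la top_filling]
    by (simp add: strongly_connected_on_def)
  moreover obtain q' where q': "q' \<in> cells la" "std la (row_filling la) q' = sum_list la"
    using std_eq_sizeE[of la "row_filling la"] top by blast
  ultimately obtain q where q: "q \<in> cells la" "std la b q = sum_list la" "fst q' \<le> fst q"
    using CS_path_max_row_le by blast
  have "corner \<in> cells la" and "\<forall>p\<in>cells la. p \<noteq> corner \<longrightarrow> row_filling la p < Suc l"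
    using r by (auto simp: corner_def cells_def row_filling_def l_def)
  then have "q = corner"
    using std_eq_size_upd_max q(1,2) by (simp add: b_def)
  then show False
    using q(3) std_row_filling_max_top_row[OF _ q'] top r(1) by (simp add: corner_def l_def)
qed

section \<open>Rectangles\<close>

lemma cells_replicate: "p \<in> cells (replicate L W) \<longleftrightarrow> fst p < L \<and> snd p < W"
  by (cases p) (auto simp: cells_def)

definition rect_rot :: "nat \<Rightarrow> nat \<Rightarrow> nat \<times> nat \<Rightarrow> nat \<times> nat" where
  "rect_rot L W p = (L - Suc (fst p), W - Suc (snd p))"

definition rect_dual :: "nat \<Rightarrow> nat \<Rightarrow> nat \<Rightarrow> (nat \<times> nat \<Rightarrow> nat) \<Rightarrow> nat \<times> nat \<Rightarrow> nat" where
  "rect_dual L W m b p = (if fst p < L \<and> snd p < W then Suc m - b (rect_rot L W p) else 0)"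

lemma rect_rot_in: "fst p < L \<and> snd p < W \<Longrightarrow> fst (rect_rot L W p) < L \<and> snd (rect_rot L W p) < W"
  by (simp add: rect_rot_def)

lemma rect_rot_rect_rot: "fst p < L \<and> snd p < W \<Longrightarrow> rect_rot L W (rect_rot L W p) = p"
  by (cases p) (simp add: rect_rot_def)

lemma rev_upt_0: "rev [0..<m] = map (\<lambda>i. m - Suc i) [0..<m]"
  by (rule nth_equalityI) (auto simp: rev_nth)

lemma reading_cells_replicate:
  "reading_cells (replicate L W) = concat (map (\<lambda>r. map (\<lambda>c. (r, c)) [0..<W]) (rev [0..<L]))"
  unfolding reading_cells_def by (intro arg_cong[where f = concat] map_cong) auto

lemma rev_reading_cells_replicate:
  "rev (reading_cells (replicate L W)) = map (rect_rot L W) (reading_cells (replicate L W))"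
proof -
  have "rev (reading_cells (replicate L W)) = concat (map (\<lambda>r. rev (map (\<lambda>c. (r, c)) [0..<W])) [0..<L])"
    by (simp add: reading_cells_replicate rev_concat rev_map comp_def)
  also have "\<dots> = concat (map (\<lambda>r. map (\<lambda>c. rect_rot L W (L - Suc r, c)) [0..<W]) [0..<L])"
    by (intro arg_cong[where f = concat] map_cong) (auto simp: rev_map rev_upt_0 rect_rot_def)
  also have "\<dots> = map (rect_rot L W) (reading_cells (replicate L W))"
    by (simp add: reading_cells_replicate map_concat rev_upt_0 comp_def)
  finally show ?thesis .
qed

lemma row_word_rect_dual:
  "row_word (replicate L W) (rect_dual L W n b) = dual_word n (row_word (replicate L W) b)"
proof -
  have "row_word (replicate L W) (rect_dual L W n b) =
      map (\<lambda>p. Suc n - b (rect_rot L W p)) (reading_cells (replicate L W))"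
    unfolding row_word_eq_map
    by (intro map_cong) (auto simp: rect_dual_def set_reading_cells cells_replicate)
  also have "\<dots> = map (\<lambda>v. Suc n - v) (map b (rev (reading_cells (replicate L W))))"
    by (simp add: rev_reading_cells_replicate)
  finally show ?thesis
    by (simp add: dual_word_def row_word_eq_map rev_map)
qed

lemma rect_dual_SSYT:
  assumes la: "la = replicate L W" and b: "b \<in> SSYT la n"
  shows "rect_dual L W n b \<in> SSYT la n"
proof -
  have cells: "p \<in> cells la \<longleftrightarrow> fst p < L \<and> snd p < W" for p
    by (simp add: la cells_replicate)
  have bounds: "1 \<le> b p \<and> b p \<le> n" if "fst p < L" "snd p < W" for p
    using b that cells by (auto simp: SSYT_def)
  show ?thesis
    unfolding SSYT_def
  proof (intro CollectI conjI allI impI ballI)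
    fix r c
    assume "(r, Suc c) \<in> cells la"
    then have rc: "r < L" "Suc c < W"
      by (simp_all add: cells)
    then have "b (L - Suc r, W - Suc (Suc c)) \<le> b (L - Suc r, Suc (W - Suc (Suc c)))"
      using b by (auto simp: SSYT_def cells)
    then show "rect_dual L W n b (r, c) \<le> rect_dual L W n b (r, Suc c)"
      using rc by (simp add: rect_dual_def rect_rot_def Suc_diff_Suc diff_le_mono2)
  next
    fix r c
    assume "(Suc r, c) \<in> cells la"
    then have rc: "Suc r < L" "c < W"
      by (simp_all add: cells)
    then have "b (L - Suc (Suc r), W - Suc c) < b (Suc (L - Suc (Suc r)), W - Suc c)"
      using b by (auto simp: SSYT_def cells)
    moreover have "b (Suc (L - Suc (Suc r)), W - Suc c) \<le> n"
      using bounds rc by simp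
    ultimately show "rect_dual L W n b (r, c) < rect_dual L W n b (Suc r, c)"
      using rc by (simp add: rect_dual_def rect_rot_def Suc_diff_Suc) linarith
  next
    fix p
    assume "p \<notin> cells la"
    then show "rect_dual L W n b p = 0"
      by (auto simp: rect_dual_def cells)
  next
    fix p
    assume "p \<in> cells la"
    then have "fst p < L \<and> snd p < W"
      by (simp add: cells)
    moreover from this have "1 \<le> b (rect_rot L W p) \<and> b (rect_rot L W p) \<le> n"
      using bounds rect_rot_in by blast
    ultimately show "1 \<le> rect_dual L W n b p" and "rect_dual L W n b p \<le> n"
      by (auto simp: rect_dual_def)
  qed
qed

lemma rect_dual_rect_dual:
  assumes la: "la = replicate L W" and b: "b \<in> SSYT la m"
  shows "rect_dual L W m (rect_dual L W m b) = b"
proof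
  fix p
  show "rect_dual L W m (rect_dual L W m b) p = b p"
  proof (cases "fst p < L \<and> snd p < W")
    case True
    then have "b p \<le> m"
      using b by (auto simp: SSYT_def la cells_replicate)
    with True show ?thesis
      by (simp add: rect_dual_def rect_rot_in rect_rot_rect_rot)
  next
    case False
    with b show ?thesis
      by (auto simp: rect_dual_def la cells_replicate SSYT_outside)
  qed
qed

lemma card_std_less_after:
  assumes q: "q \<in> cells la"
  shows "card {p \<in> cells la. std_less b q p} = sum_list la - std la b q"
proof -
  have "cells la - {q} = {p \<in> cells la. std_less b q p} \<union> {p \<in> cells la. std_less b p q}"
    using std_less_total std_less_irrefl q by blast
  moreover have "{p \<in> cells la. std_less b q p} \<inter> {p \<in> cells la. std_less b p q} = {}"
    using std_less_asym by blast
  ultimately have "card (cells la - {q}) =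
      card {p \<in> cells la. std_less b q p} + card {p \<in> cells la. std_less b p q}"
    by (simp add: card_Un_disjoint finite_cells)
  then show ?thesis
    using q std_eq_card[OF q, of b] by (simp add: card_cells finite_cells)
qed

lemma std_less_rect_dual:
  assumes la: "la = replicate L W" and b: "b \<in> SSYT la n"
    and p: "p \<in> cells la" and q: "q \<in> cells la"
  shows "std_less (rect_dual L W n b) p q \<longleftrightarrow> std_less b (rect_rot L W q) (rect_rot L W p)"
proof -
  have in_rect: "fst p < L \<and> snd p < W" "fst q < L \<and> snd q < W"
    using p q by (simp_all add: la cells_replicate)
  then have "b (rect_rot L W p) \<le> n" "b (rect_rot L W q) \<le> n"
    using b rect_rot_in by (auto simp: SSYT_def la cells_replicate)
  moreover have "read_before p q \<longleftrightarrow> read_before (rect_rot L W q) (rect_rot L W p)"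
    using in_rect by (auto simp: rect_rot_def read_before_def)
  ultimately show ?thesis
    using in_rect by (auto simp: std_less_def rect_dual_def)
qed

lemma std_less_rect_dual_eq_image:
  assumes la: "la = replicate L W" and b: "b \<in> SSYT la n" and q: "q \<in> cells la"
  shows "{p \<in> cells la. std_less (rect_dual L W n b) p q} =
    rect_rot L W ` {p \<in> cells la. std_less b (rect_rot L W q) p}"
proof (intro equalityI subsetI)
  have cells: "p \<in> cells la \<longleftrightarrow> fst p < L \<and> snd p < W" for p
    by (simp add: la cells_replicate)
  fix p
  assume "p \<in> {p \<in> cells la. std_less (rect_dual L W n b) p q}"
  then have p: "p \<in> cells la" "std_less (rect_dual L W n b) p q"
    by simp_all
  then have "rect_rot L W p \<in> {p \<in> cells la. std_less b (rect_rot L W q) p}"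
    using std_less_rect_dual[OF la b p(1) q] rect_rot_in[of p L W] cells by simp
  moreover have "p = rect_rot L W (rect_rot L W p)"
    using rect_rot_rect_rot p(1) cells by simp
  ultimately show "p \<in> rect_rot L W ` {p \<in> cells la. std_less b (rect_rot L W q) p}"
    by blast
next
  have cells: "p \<in> cells la \<longleftrightarrow> fst p < L \<and> snd p < W" for p
    by (simp add: la cells_replicate)
  fix p
  assume "p \<in> rect_rot L W ` {p \<in> cells la. std_less b (rect_rot L W q) p}"
  then obtain p' where p': "p' \<in> cells la" "std_less b (rect_rot L W q) p'"
    and p: "p = rect_rot L W p'"
    by blast
  have "p \<in> cells la"
    using rect_rot_in[of p' L W] p' p cells by simp
  moreover have "rect_rot L W p = p'"
    using rect_rot_rect_rot p' p cells by simp
  ultimately show "p \<in> {p \<in> cells la. std_less (rect_dual L W n b) p q}"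
    using std_less_rect_dual[OF la b _ q] p' by simp
qed

lemma std_rect_dual:
  assumes la: "la = replicate L W" and b: "b \<in> SSYT la n"
  shows "std la (rect_dual L W n b) = rect_dual L W (sum_list la) (std la b)"
proof
  fix q
  have cells: "p \<in> cells la \<longleftrightarrow> fst p < L \<and> snd p < W" for p
    by (simp add: la cells_replicate)
  show "std la (rect_dual L W n b) q = rect_dual L W (sum_list la) (std la b) q"
  proof (cases "q \<in> cells la")
    case True
    define q0 where "q0 = rect_rot L W q"
    have q0: "q0 \<in> cells la"
      using True rect_rot_in cells by (simp add: q0_def)
    have "inj_on (rect_rot L W) {p \<in> cells la. std_less b q0 p}"
      by (rule inj_onI) (metis cells mem_Collect_eq rect_rot_rect_rot)
    then have "card {p \<in> cells la. std_less (rect_dual L W n b) p q} = sum_list la - std la b q0"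
      using card_std_less_after[OF q0, of b] std_less_rect_dual_eq_image[OF la b True]
      by (simp add: q0_def card_image)
    then have "std la (rect_dual L W n b) q = Suc (sum_list la) - std la b q0"
      using std_eq_card[OF True] std_le_size[OF q0, of b] by simp
    moreover have "fst q < L \<and> snd q < W"
      using True cells by blast
    ultimately show ?thesis
      by (auto simp: rect_dual_def q0_def)
  next
    case False
    then show ?thesis
      by (auto simp: std_outside rect_dual_def la cells_replicate)
  qed
qed

lemma CS_edge_rect_dual:
  assumes la: "la = replicate L W" "is_partition la" and e: "(T, T') \<in> CS_edges la n"
  shows "(rect_dual L W (sum_list la) T', rect_dual L W (sum_list la) T) \<in> CS_edges la n"
proof -
  obtain b b' i where b: "b \<in> SSYT la n" and b': "b' \<in> SSYT la n" and i: "1 \<le> i" "i < n"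
    and T: "std la b = T" and T': "std la b' = T'" and f: "crystal_f la i b b'"
    and SYT: "T \<in> SYT la" "T' \<in> SYT la" "T \<noteq> T'"
    using e unfolding CS_edges_def by blast
  have "crystal_f la (n - i) (rect_dual L W n b') (rect_dual L W n b)"
    using f_word_dual_word[OF _ i row_word_le[OF b]] f
    by (simp add: crystal_f_def la(1) row_word_rect_dual)
  moreover have "std la (rect_dual L W n b) = rect_dual L W (sum_list la) T"
    and "std la (rect_dual L W n b') = rect_dual L W (sum_list la) T'"
    using std_rect_dual[OF la(1) b] std_rect_dual[OF la(1) b'] T T' by simp_all
  moreover have "rect_dual L W (sum_list la) T' \<noteq> rect_dual L W (sum_list la) T"
    using rect_dual_rect_dual[OF la(1) SYT_in_SSYT[OF SYT(1) order_refl]]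
      rect_dual_rect_dual[OF la(1) SYT_in_SSYT[OF SYT(2) order_refl]] SYT(3) by metis
  moreover have "n - i < n" "1 \<le> n - i"
    using i by simp_all
  ultimately show ?thesis
    unfolding CS_edges_def
    using std_in_SYT[OF la(2)] rect_dual_SSYT[OF la(1)] b b' by fastforce
qed

lemma CS_path_rect_dual:
  assumes la: "la = replicate L W" "is_partition la" and p: "(T, T') \<in> (CS_edges la n)\<^sup>*"
  shows "(rect_dual L W (sum_list la) T', rect_dual L W (sum_list la) T) \<in> (CS_edges la n)\<^sup>*"
  using p
proof (induction rule: rtrancl_induct)
  case (step T' T'')
  then show ?case
    using CS_edge_rect_dual[OF la] by (meson converse_rtrancl_into_rtrancl)
qed simp

lemma CS_path_to_killed_by_all_f:
  assumes la: "is_partition la"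
  shows "b \<in> SSYT la n \<Longrightarrow> \<exists>b0\<in>SSYT la n. (\<forall>i. 1 \<le> i \<and> i < n \<longrightarrow> f_word i (row_word la b0) = None)
    \<and> (std la b, std la b0) \<in> (CS_edges la n)\<^sup>*"
proof (induction "\<Sum>p\<in>cells la. n - b p" arbitrary: b rule: less_induct)
  case less
  show ?case
  proof (cases "\<forall>i. 1 \<le> i \<and> i < n \<longrightarrow> f_word i (row_word la b) = None")
    case True
    with less.prems show ?thesis
      by blast
  next
    case False
    then obtain i k where i: "1 \<le> i" "i < n" and k: "last_unbracketed i (row_word la b) k"
      by (auto simp: f_word_eq_Some_iff)
    define b' where "b' = b(reading_cells la ! k := Suc i)"
    have b': "b' \<in> SSYT la n" and f: "crystal_f la i b b'"
      using crystal_f_last_unbracketed[OF less.prems i(2) k] by (simp_all add: b'_def)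
    have kN: "k < sum_list la" and bk: "b (reading_cells la ! k) = i"
      using unbracketed_row_wordD[of i la b k] k by (auto simp: last_unbracketed_def)
    have "(\<Sum>p\<in>cells la. n - b' p) < (\<Sum>p\<in>cells la. n - b p)"
    proof (rule sum_strict_mono_ex1)
      show "\<forall>p\<in>cells la. n - b' p \<le> n - b p"
        using bk by (simp add: b'_def diff_le_mono2)
      show "\<exists>p\<in>cells la. n - b' p < n - b p"
        using reading_cells_nth_in_cells[OF kN] bk i by (auto simp: b'_def)
    qed (rule finite_cells)
    then obtain b0 where b0: "b0 \<in> SSYT la n" "\<forall>i. 1 \<le> i \<and> i < n \<longrightarrow> f_word i (row_word la b0) = None"
      and path: "(std la b', std la b0) \<in> (CS_edges la n)\<^sup>*"
      using less.hyps[OF _ b'] by blast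
    have "(std la b, std la b') \<in> (CS_edges la n)\<^sup>="
      using std_in_SYT[OF la less.prems] std_in_SYT[OF la b'] less.prems b' i f
      by (auto simp: CS_edges_def)
    with path have "(std la b, std la b0) \<in> (CS_edges la n)\<^sup>*"
      by (auto intro: converse_rtrancl_into_rtrancl)
    with b0 show ?thesis
      by blast
  qed
qed

definition lowest_filling :: "nat \<Rightarrow> nat \<Rightarrow> nat \<Rightarrow> nat \<times> nat \<Rightarrow> nat" where
  "lowest_filling L W n p = (if fst p < L \<and> snd p < W then n - (L - Suc (fst p)) else 0)"

lemma rectangle_height_le:
  assumes la: "la = replicate L W" and n: "sum_list la \<le> n" and W: "0 < W"
  shows "L \<le> n"
proof -
  have "L \<le> L * W"
    using W by simp
  also have "\<dots> \<le> n"
    using n by (simp add: la sum_list_replicate)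
  finally show ?thesis .
qed

lemma lowest_filling_SSYT:
  assumes la: "la = replicate L W" and n: "sum_list la \<le> n"
  shows "lowest_filling L W n \<in> SSYT la n"
  using rectangle_height_le[OF la n]
  by (auto simp: SSYT_def lowest_filling_def la cells_replicate)

text \<open>If the first entry \<open>v\<close> of a row were too small, then, all earlier letters of the
  reading word being at least \<open>v + 2\<close>, this \<open>v\<close> would be an unbracketed letter and \<open>f\<^sub>v\<close>
  would not vanish.\<close>

lemma killed_by_all_f_row_start_ge:
  assumes la: "la = replicate L W" and b: "b \<in> SSYT la n"
    and killed: "\<And>i. 1 \<le> i \<Longrightarrow> i < n \<Longrightarrow> f_word i (row_word la b) = None"
    and r: "r < L" and W: "0 < W"
    and above: "\<And>r' c'. r < r' \<Longrightarrow> r' < L \<Longrightarrow> c' < W \<Longrightarrow> b (r', c') = n - (L - Suc r')"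
  shows "n - (L - Suc r) \<le> b (r, 0)"
proof (rule ccontr)
  assume "\<not> ?thesis"
  then have v: "b (r, 0) < n - (L - Suc r)"
    by simp
  have cells: "p \<in> cells la \<longleftrightarrow> fst p < L \<and> snd p < W" for p
    by (simp add: la cells_replicate)
  obtain k where k: "k < sum_list la" "reading_cells la ! k = (r, 0)"
    using cells_reading_indexE[of "(r, 0)" la] r W cells by auto
  have "row_word la b ! s \<noteq> Suc (b (r, 0))" if "s < k" for s
  proof -
    have s: "s < sum_list la" "read_before (reading_cells la ! s) (r, 0)"
      using that k read_before_reading_cells_iff[of s la k] by simp_all
    then have "r < fst (reading_cells la ! s)" "fst (reading_cells la ! s) < L"
      "snd (reading_cells la ! s) < W"
      using reading_cells_nth_in_cells[OF s(1)] cells by (auto simp: read_before_def)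
    then show ?thesis
      using above[of "fst (reading_cells la ! s)" "snd (reading_cells la ! s)"] v s(1)
      by (simp add: row_word_eq_map)
  qed
  with k have "unbracketed (b (r, 0)) (row_word la b) k"
    by (intro unbracketed_if_no_Suc_before) (simp_all add: row_word_eq_map)
  moreover have "1 \<le> b (r, 0)"
    using b r W by (auto simp: SSYT_def cells)
  ultimately show False
    using killed[of "b (r, 0)"] v by (auto simp: f_word_eq_None_iff)
qed

lemma killed_by_all_f_row:
  assumes la: "la = replicate L W" and b: "b \<in> SSYT la n" and n: "sum_list la \<le> n"
    and killed: "\<And>i. 1 \<le> i \<Longrightarrow> i < n \<Longrightarrow> f_word i (row_word la b) = None"
    and r: "r < L" and c: "c < W"
    and above: "\<And>r' c'. r < r' \<Longrightarrow> r' < L \<Longrightarrow> c' < W \<Longrightarrow> b (r', c') = n - (L - Suc r')"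
  shows "b (r, c) = n - (L - Suc r)"
proof -
  have cells: "p \<in> cells la \<longleftrightarrow> fst p < L \<and> snd p < W" for p
    by (simp add: la cells_replicate)
  have "b (r, c) \<le> n - (L - Suc r)"
  proof (cases "Suc r < L")
    case True
    then have "b (r, c) < b (Suc r, c)"
      using b c by (auto simp: SSYT_def cells)
    with True above[of "Suc r" c] c rectangle_height_le[OF la n] show ?thesis
      by simp
  next
    case False
    with b r c show ?thesis
      by (auto simp: SSYT_def cells)
  qed
  moreover have "b (r, 0) \<le> b (r, c)"
    using SSYT_row_mono[OF b] r c cells by simp
  ultimately show ?thesis
    using killed_by_all_f_row_start_ge[OF la b killed r _ above] c by simp
qed

lemma killed_by_all_f_eq_lowest_filling:
  assumes la: "la = replicate L W" and b: "b \<in> SSYT la n" and n: "sum_list la \<le> n"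
    and killed: "\<And>i. 1 \<le> i \<Longrightarrow> i < n \<Longrightarrow> f_word i (row_word la b) = None"
  shows "b = lowest_filling L W n"
proof
  fix p
  have rows: "\<forall>c<W. b (r, c) = n - (L - Suc r)" if "r < L" for r
    using that
  proof (induction "L - r" arbitrary: r rule: less_induct)
    case less
    then show ?case
      using killed_by_all_f_row[OF la b n killed] by (metis diff_less_mono2)
  qed
  show "b p = lowest_filling L W n p"
    using rows[of "fst p"] SSYT_outside[OF b, of p]
    by (cases p) (auto simp: lowest_filling_def la cells_replicate)
qed

lemma std_rect_dual_lowest_filling:
  assumes la: "la = replicate L W" and n: "sum_list la \<le> n"
  shows "std la (rect_dual L W n (lowest_filling L W n)) = std la (lowest_filling L W n)"
proof (rule std_cong, intro ballI)
  have entries: "rect_dual L W n (lowest_filling L W n) p = Suc (fst p)"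
    "lowest_filling L W n p + L = n + Suc (fst p)" if "p \<in> cells la" for p
    using that rectangle_height_le[OF la n]
    by (auto simp: la cells_replicate rect_dual_def lowest_filling_def rect_rot_def)
  fix p q
  assume "p \<in> cells la" "q \<in> cells la"
  with entries[of p] entries[of q]
  show "(rect_dual L W n (lowest_filling L W n) p < rect_dual L W n (lowest_filling L W n) q
      \<longleftrightarrow> lowest_filling L W n p < lowest_filling L W n q) \<and>
    (rect_dual L W n (lowest_filling L W n) p = rect_dual L W n (lowest_filling L W n) q
      \<longleftrightarrow> lowest_filling L W n p = lowest_filling L W n q)"
    by linarith
qed

theorem rectangle_strongly_connected:
  assumes la: "la = replicate L W" "is_partition la" and n: "sum_list la \<le> n"
  shows "strongly_connected_on (SYT la) (CS_edges la n)"
  unfolding strongly_connected_on_def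
proof (intro ballI)
  fix T T'
  assume T: "T \<in> SYT la" and T': "T' \<in> SYT la"
  define H where "H = std la (lowest_filling L W n)"
  have to_H: "(std la b, H) \<in> (CS_edges la n)\<^sup>*" if "b \<in> SSYT la n" for b
    using CS_path_to_killed_by_all_f[OF la(2) that] killed_by_all_f_eq_lowest_filling[OF la(1) _ n]
    by (auto simp: H_def)
  let ?dual = "rect_dual L W (sum_list la)"
  have H_self_dual: "?dual H = H"
    using std_rect_dual[OF la(1) lowest_filling_SSYT[OF la(1) n]] std_rect_dual_lowest_filling[OF la(1) n]
    by (simp add: H_def)
  have "(T, H) \<in> (CS_edges la n)\<^sup>*"
    using to_H[OF SYT_in_SSYT[OF T n]] std_SYT_eq[OF T] by simp
  moreover have "(?dual T', H) \<in> (CS_edges la n)\<^sup>*"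
    using to_H[OF rect_dual_SSYT[OF la(1) SYT_in_SSYT[OF T' n]]]
      std_rect_dual[OF la(1) SYT_in_SSYT[OF T' n]] std_SYT_eq[OF T'] by simp
  then have "(H, T') \<in> (CS_edges la n)\<^sup>*"
    using CS_path_rect_dual[OF la] H_self_dual rect_dual_rect_dual[OF la(1) SYT_in_SSYT[OF T' order_refl]]
    by metis
  ultimately show "(T, T') \<in> (CS_edges la n)\<^sup>*"
    by simp
qed

theorem theorem4p16:
  fixes la :: "nat list" and n :: nat
  assumes "is_partition la" and "sum_list la \<le> n"
  shows "strongly_connected_on (SYT la) (CS_edges la n) \<longleftrightarrow> is_rectangle la"
proof
  assume "strongly_connected_on (SYT la) (CS_edges la n)"
  then show "is_rectangle la"
    using not_rectangle_not_strongly_connected[OF assms] by blast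
next
  assume "is_rectangle la"
  then obtain W L where "la = replicate L W"
    unfolding is_rectangle_def by blast
  then show "strongly_connected_on (SYT la) (CS_edges la n)"
    using rectangle_strongly_connected assms by blast
qed

end
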